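(* There is an absolute constant $C>0$ (independent of $n$, $f$, $g$, $x$) such that for all real-valued $f,g\in C^{3}[0,1]$, all $x\in[0,1]$ and $n\in\mathbb{N}$, $$n\left|B_{n}(fg)(x)-B_{n}(f)(x)B_{n}(g)(x)-\frac{x(1-x)}{n}f'(x)g'(x)\right|\le C\,x(1-x)\frac{1}{\sqrt{n}}\Big[\|(fg)'''\|+\|f''\|\,\|g''\|+\|g\|\,\|f'''\|+\|f\|\,\|g'''\|\Big].$$ In particular the left-hand side is $O\big(x(1-x)/\sqrt{n}\big)$.
   Context: For $f:[0,1]\to\mathbb{R}$ the Bernstein polynomials are $B_{n}(f)(x)=\sum_{k=0}^{n}\binom{n}{k}x^{k}(1-x)^{n-k}f(k/n)$. $\|\cdot\|$ denotes the uniform norm on $C[0,1]$. *)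

theory Defs
  imports "HOL-Analysis.Analysis"
begin

definition Bpoly :: "nat \<Rightarrow> (real \<Rightarrow> real) \<Rightarrow> real \<Rightarrow> real" where
  "Bpoly n f x = (\<Sum>k\<le>n. Bernstein n k x * f (real k / real n))"

definition C3_on01 :: "(real \<Rightarrow> real) \<Rightarrow> (real \<Rightarrow> real) \<Rightarrow> (real \<Rightarrow> real) \<Rightarrow> (real \<Rightarrow> real) \<Rightarrow> bool" where
  "C3_on01 f f1 f2 f3 \<longleftrightarrow>
     (\<forall>x\<in>{0..1}. (f has_real_derivative f1 x) (at x within {0..1}) \<and>
                  (f1 has_real_derivative f2 x) (at x within {0..1}) \<and>
                  (f2 has_real_derivative f3 x) (at x within {0..1})) \<and>
     continuous_on {0..1} f3"

definition unorm :: "(real \<Rightarrow> real) \<Rightarrow> real" where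
  "unorm f = (SUP x\<in>{0..1}. \<bar>f x\<bar>)"

end

theory Submission
  imports Defs
begin

text \<open>
  Write B_n phi (x) = phi(x) + s phi''(x)/2 + R_n phi (x) with s = x(1-x)/n (Voronovskaya).
  Taylor's formula of order two and the moment bound B_n(|t - x|^3)(x) <= (3/2) x(1-x)/n^(3/2)
  give n |R_n phi (x)| <= (3/4) ||phi'''|| x(1-x)/sqrt n. By Leibniz' rule
  (fg)'' = f''g + 2f'g' + fg'', the defect B_n(fg) - B_n f B_n g - s f'g' equals
  R_n(fg) - f R_n g - g R_n f - (B_n f - f)(B_n g - g), and the last product is at most
  s^2 ||f''|| ||g''||, where n s^2 <= x(1-x)/sqrt n. Hence C = 1 works.
\<close>

lemma Bpoly_add: "Bpoly n (\<lambda>t. \<phi> t + \<psi> t) x = Bpoly n \<phi> x + Bpoly n \<psi> x"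
  by (simp add: Bpoly_def distrib_left sum.distrib)

lemma Bpoly_diff: "Bpoly n (\<lambda>t. \<phi> t - \<psi> t) x = Bpoly n \<phi> x - Bpoly n \<psi> x"
  by (simp add: Bpoly_def right_diff_distrib sum_subtractf)

lemma Bpoly_cmult: "Bpoly n (\<lambda>t. c * \<phi> t) x = c * Bpoly n \<phi> x"
  by (simp add: Bpoly_def sum_distrib_left mult_ac)

lemma Bpoly_const: "Bpoly n (\<lambda>t. c) x = c"
  by (simp add: Bpoly_def flip: sum_distrib_right)

lemma Bpoly_mono:
  assumes "0 \<le> x" "x \<le> 1" and le: "\<And>t. t \<in> {0..1} \<Longrightarrow> \<phi> t \<le> \<psi> t"
  shows "Bpoly n \<phi> x \<le> Bpoly n \<psi> x"
  unfolding Bpoly_def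
proof (rule sum_mono)
  fix k assume "k \<in> {..n}"
  then have "real k / real n \<in> {0..1}"
    by (cases "n = 0") (auto simp: divide_le_eq_1)
  then show "Bernstein n k x * \<phi> (real k / real n) \<le> Bernstein n k x * \<psi> (real k / real n)"
    using le assms by (intro mult_left_mono) (auto simp: Bernstein_nonneg)
qed

lemma abs_Bpoly_le:
  assumes "0 \<le> x" "x \<le> 1"
  shows "\<bar>Bpoly n \<phi> x\<bar> \<le> Bpoly n (\<lambda>t. \<bar>\<phi> t\<bar>) x"
  unfolding Bpoly_def
  by (rule order_trans[OF sum_abs]) (simp add: abs_mult Bernstein_nonneg assms)

lemma sum_Bernstein_falling_factorial:
  "(\<Sum>k\<le>n. (\<Prod>i<j. real k - real i) * Bernstein n k x) = (\<Prod>i<j. real n - real i) * x ^ j"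
proof (induction j arbitrary: n)
  case 0
  then show ?case by simp
next
  case (Suc j)
  show ?case
  proof (cases n)
    case 0
    then show ?thesis by (auto simp: prod.lessThan_Suc_shift)
  next
    case (Suc m)
    have shift: "(\<Prod>i<Suc j. real (Suc k) - real i) * Bernstein (Suc m) (Suc k) x
        = (real (Suc m) * x) * ((\<Prod>i<j. real k - real i) * Bernstein m k x)" for k
    proof -
      have "real (Suc k) * real (Suc m choose Suc k) = real (Suc m) * real (m choose k)"
        by (metis Suc_times_binomial of_nat_mult)
      then show ?thesis
        unfolding Bernstein_def prod.lessThan_Suc_shift
        by (simp add: mult_ac)
    qed
    have "(\<Sum>k\<le>n. (\<Prod>i<Suc j. real k - real i) * Bernstein n k x)
        = (\<Sum>k\<le>m. (\<Prod>i<Suc j. real (Suc k) - real i) * Bernstein (Suc m) (Suc k) x)"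
      unfolding Suc
      by (simp only: sum.atMost_Suc_shift) (simp add: prod.lessThan_Suc_shift del: prod.lessThan_Suc)
    also have "\<dots> = (real (Suc m) * x) * ((\<Prod>i<j. real m - real i) * x ^ j)"
      unfolding shift sum_distrib_left[symmetric] Suc.IH ..
    also have "\<dots> = (\<Prod>i<Suc j. real n - real i) * x ^ Suc j"
      using Suc by (simp add: prod.lessThan_Suc_shift del: prod.lessThan_Suc)
    finally show ?thesis .
  qed
qed

lemma sum_Bernstein_central_moment_2:
  "(\<Sum>k\<le>n. (real k - real n * x)^2 * Bernstein n k x) = real n * x * (1 - x)"
proof -
  have "(real k - real n * x)^2 * Bernstein n k x =
      real k * (real k - 1) * Bernstein n k x + (1 - 2 * real n * x) * (real k * Bernstein n k x)
      + (real n * x)^2 * Bernstein n k x" for k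
    by (simp add: algebra_simps power2_eq_square)
  then show ?thesis
    by (simp add: sum.distrib flip: sum_distrib_left) (simp add: algebra_simps power2_eq_square)
qed

lemma sum_Bernstein_central_moment_4:
  "(\<Sum>k\<le>n. (real k - real n * x)^4 * Bernstein n k x)
     = real n * x * (1 - x) * (1 + 3 * (real n - 2) * x * (1 - x))"
proof -
  define a where "a = real n * x"
  have "(\<Prod>i<3. real k - real i) = real k * (real k - 1) * (real k - 2)"
    and "(\<Prod>i<4. real k - real i) = real k * (real k - 1) * (real k - 2) * (real k - 3)" for k
    by (simp_all add: numeral_eq_Suc prod.lessThan_Suc algebra_simps)
  then have falling_3: "(\<Sum>k\<le>n. real k * (real k - 1) * (real k - 2) * Bernstein n k x)
        = real n * (real n - 1) * (real n - 2) * x^3"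
    and falling_4: "(\<Sum>k\<le>n. real k * (real k - 1) * (real k - 2) * (real k - 3) * Bernstein n k x)
        = real n * (real n - 1) * (real n - 2) * (real n - 3) * x^4"
    using sum_Bernstein_falling_factorial[where j=3] sum_Bernstein_falling_factorial[where j=4]
    by simp_all
  have "(real k - a)^4 * Bernstein n k x =
      real k * (real k - 1) * (real k - 2) * (real k - 3) * Bernstein n k x
      + (6 - 4*a) * (real k * (real k - 1) * (real k - 2) * Bernstein n k x)
      + (7 - 12*a + 6*a^2) * (real k * (real k - 1) * Bernstein n k x)
      + (1 - 4*a + 6*a^2 - 4*a^3) * (real k * Bernstein n k x)
      + a^4 * Bernstein n k x" for k
    by (simp add: algebra_simps power2_eq_square power3_eq_cube power4_eq_xxxx)
  then have "(\<Sum>k\<le>n. (real k - a)^4 * Bernstein n k x) =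
      real n * (real n - 1) * (real n - 2) * (real n - 3) * x^4
      + (6 - 4*a) * (real n * (real n - 1) * (real n - 2) * x^3)
      + (7 - 12*a + 6*a^2) * (real n * (real n - 1) * x^2)
      + (1 - 4*a + 6*a^2 - 4*a^3) * (real n * x) + a^4"
    by (simp only: sum.distrib falling_3 falling_4 sum_kk_Bernstein sum_k_Bernstein
        sum_Bernstein mult_1_right flip: sum_distrib_left)
  also have "\<dots> = real n * x * (1 - x) * (1 + 3 * (real n - 2) * x * (1 - x))"
    unfolding a_def by (simp add: algebra_simps power2_eq_square power3_eq_cube power4_eq_xxxx)
  finally show ?thesis unfolding a_def .
qed

lemma Bpoly_central_moment:
  assumes "n \<ge> 1"
  shows "Bpoly n (\<lambda>t. (t - x)^m) x = (\<Sum>k\<le>n. (real k - real n * x)^m * Bernstein n k x) / real n ^ m"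
proof -
  have "(real k / real n - x)^m = (real k - real n * x)^m / real n ^ m" for k
    using assms by (simp add: diff_divide_distrib flip: power_divide)
  then show ?thesis
    by (simp add: Bpoly_def sum_divide_distrib mult.commute)
qed

lemma Bpoly_central_moment_1: "n \<ge> 1 \<Longrightarrow> Bpoly n (\<lambda>t. t - x) x = 0"
  using Bpoly_central_moment[of n x 1]
  by (simp add: left_diff_distrib sum_subtractf flip: sum_distrib_left)

lemma Bpoly_central_moment_2: "n \<ge> 1 \<Longrightarrow> Bpoly n (\<lambda>t. (t - x)^2) x = x * (1 - x) / real n"
  unfolding Bpoly_central_moment sum_Bernstein_central_moment_2 by (simp add: power2_eq_square)

lemma Bpoly_central_moment_4_le:
  assumes "n \<ge> 1" "0 \<le> x" "x \<le> 1"
  shows "Bpoly n (\<lambda>t. (t - x)^4) x \<le> 2 * x * (1 - x) / real n ^ 2"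
proof -
  have "x * (1 - x) \<le> 1/4"
    using zero_le_power2[of "2 * x - 1"] by (simp add: power2_eq_square algebra_simps)
  moreover have "0 \<le> x * (1 - x)"
    using assms by simp
  ultimately have "1 + 3 * (real n - 2) * x * (1 - x) \<le> 2 * real n"
    using assms mult_left_mono[of "x * (1 - x)" "1/4" "3 * real n"] by (simp add: algebra_simps)
  then have bound: "x * (1 - x) * (1 + 3 * (real n - 2) * x * (1 - x)) \<le> x * (1 - x) * (2 * real n)"
    using assms by (intro mult_left_mono) auto
  have "Bpoly n (\<lambda>t. (t - x)^4) x = x * (1 - x) * (1 + 3 * (real n - 2) * x * (1 - x)) / real n ^ 3"
    unfolding Bpoly_central_moment[OF assms(1)] sum_Bernstein_central_moment_4
    using assms by (simp add: field_simps power_numeral_reduce)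
  also have "\<dots> \<le> x * (1 - x) * (2 * real n) / real n ^ 3"
    using bound by (rule divide_right_mono) simp
  also have "\<dots> = 2 * x * (1 - x) / real n ^ 2"
    using assms by (simp add: field_simps power_numeral_reduce)
  finally show ?thesis .
qed

lemma abs_cube_le_AM_GM:
  fixes d s :: real
  assumes "s > 0"
  shows "\<bar>d\<bar>^3 \<le> (d^2 / s + s * d^4) / 2"
proof -
  have "0 \<le> d^2 * (1 - s * \<bar>d\<bar>)^2"
    by simp
  then have "2 * s * \<bar>d\<bar>^3 \<le> d^2 + s^2 * d^4"
    by (simp add: algebra_simps power2_eq_square power3_eq_cube power4_eq_xxxx abs_mult_self_eq)
  then show ?thesis
    using assms by (simp add: field_simps power2_eq_square)
qed

text \<open>Cauchy-Schwarz against the second and fourth moments, in the AM-GM form above with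
  s = sqrt n balancing the two terms.\<close>

lemma Bpoly_abs_central_moment_3_le:
  assumes n: "n \<ge> 1" and x: "0 \<le> x" "x \<le> 1"
  shows "Bpoly n (\<lambda>t. \<bar>t - x\<bar>^3) x \<le> 3/2 * x * (1 - x) / (real n * sqrt (real n))"
proof -
  define s where "s = sqrt (real n)"
  have s: "s > 0" "real n = s * s"
    using n by (auto simp: s_def)
  have "Bpoly n (\<lambda>t. \<bar>t - x\<bar>^3) x \<le> Bpoly n (\<lambda>t. 1 / (2 * s) * (t - x)^2 + s / 2 * (t - x)^4) x"
    using abs_cube_le_AM_GM[OF s(1)] by (intro Bpoly_mono x) (simp add: field_simps)
  also have "\<dots> = 1 / (2 * s) * (x * (1 - x) / real n) + s / 2 * Bpoly n (\<lambda>t. (t - x)^4) x"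
    by (simp only: Bpoly_add Bpoly_cmult Bpoly_central_moment_2[OF n])
  also have "\<dots> \<le> 1 / (2 * s) * (x * (1 - x) / real n) + s / 2 * (2 * x * (1 - x) / real n ^ 2)"
    using Bpoly_central_moment_4_le[OF n x] s by (intro add_left_mono mult_left_mono) auto
  also have "\<dots> = 3/2 * x * (1 - x) / (real n * s)"
    unfolding s(2) using s(1) by (simp add: field_simps power2_eq_square)
  finally show ?thesis
    unfolding s_def .
qed

lemma Bpoly_quadratic:
  assumes "n \<ge> 1"
  shows "Bpoly n (\<lambda>t. a + c * (t - x) + b * (t - x)^2) x = a + b * (x * (1 - x) / real n)"
  by (simp only: Bpoly_add Bpoly_cmult Bpoly_const Bpoly_central_moment_1[OF assms]
      Bpoly_central_moment_2[OF assms])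

lemma abs_Bpoly_minus_quadratic_le:
  assumes n: "n \<ge> 1" and x: "0 \<le> x" "x \<le> 1"
    and err: "\<And>t. t \<in> {0..1} \<Longrightarrow> \<bar>\<phi> t - (a + c * (t - x) + b * (t - x)^2)\<bar> \<le> K * \<bar>t - x\<bar>^m"
  shows "\<bar>Bpoly n \<phi> x - a - b * (x * (1 - x) / real n)\<bar> \<le> K * Bpoly n (\<lambda>t. \<bar>t - x\<bar>^m) x"
proof -
  have "\<bar>Bpoly n \<phi> x - a - b * (x * (1 - x) / real n)\<bar>
      = \<bar>Bpoly n (\<lambda>t. \<phi> t - (a + c * (t - x) + b * (t - x)^2)) x\<bar>"
    by (simp only: Bpoly_diff Bpoly_quadratic[OF n])
  also have "\<dots> \<le> Bpoly n (\<lambda>t. \<bar>\<phi> t - (a + c * (t - x) + b * (t - x)^2)\<bar>) x"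
    using x by (rule abs_Bpoly_le)
  also have "\<dots> \<le> Bpoly n (\<lambda>t. K * \<bar>t - x\<bar>^m) x"
    using x err by (rule Bpoly_mono)
  finally show ?thesis
    by (simp only: Bpoly_cmult)
qed

lemma Taylor_linear_remainder_le:
  fixes \<phi> :: "real \<Rightarrow> real"
  assumes "convex S"
    and "\<And>t. t \<in> S \<Longrightarrow> (\<phi> has_real_derivative \<phi>1 t) (at t within S)"
    and "\<And>t. t \<in> S \<Longrightarrow> (\<phi>1 has_real_derivative \<phi>2 t) (at t within S)"
    and "\<And>t. t \<in> S \<Longrightarrow> \<bar>\<phi>2 t\<bar> \<le> M"
    and "x \<in> S" "t \<in> S"
  shows "\<bar>\<phi> t - (\<phi> x + \<phi>1 x * (t - x))\<bar> \<le> M * (t - x)^2"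
proof -
  define F where "F = (\<lambda>i::nat. [\<phi>, \<phi>1, \<phi>2] ! i)"
  have "norm (F 0 t - (\<Sum>i\<le>1. F i x * (t - x) ^ i / fact i)) \<le> M * norm (t - x) ^ Suc 1 / fact 1"
    by (rule field_Taylor[where S = S]) (use assms in \<open>auto simp: F_def less_Suc_eq_le le_Suc_eq\<close>)
  then show ?thesis
    by (simp add: F_def power2_eq_square)
qed

lemma Taylor_quadratic_remainder_le:
  fixes \<phi> :: "real \<Rightarrow> real"
  assumes "convex S"
    and "\<And>t. t \<in> S \<Longrightarrow> (\<phi> has_real_derivative \<phi>1 t) (at t within S)"
    and "\<And>t. t \<in> S \<Longrightarrow> (\<phi>1 has_real_derivative \<phi>2 t) (at t within S)"
    and "\<And>t. t \<in> S \<Longrightarrow> (\<phi>2 has_real_derivative \<phi>3 t) (at t within S)"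
    and "\<And>t. t \<in> S \<Longrightarrow> \<bar>\<phi>3 t\<bar> \<le> M"
    and "x \<in> S" "t \<in> S"
  shows "\<bar>\<phi> t - (\<phi> x + \<phi>1 x * (t - x) + \<phi>2 x / 2 * (t - x)^2)\<bar> \<le> M / 2 * \<bar>t - x\<bar>^3"
proof -
  define F where "F = (\<lambda>i::nat. [\<phi>, \<phi>1, \<phi>2, \<phi>3] ! i)"
  have "norm (F 0 t - (\<Sum>i\<le>2. F i x * (t - x) ^ i / fact i)) \<le> M * norm (t - x) ^ Suc 2 / fact 2"
    by (rule field_Taylor[where S = S])
      (use assms in \<open>auto simp: F_def numeral_2_eq_2 numeral_3_eq_3 le_Suc_eq\<close>)
  then show ?thesis
    by (simp add: F_def numeral_2_eq_2 numeral_3_eq_3 mult_ac)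
qed

lemma abs_Bpoly_minus_self_le:
  assumes n: "n \<ge> 1" and x: "0 \<le> x" "x \<le> 1"
    and "\<And>t. t \<in> {0..1} \<Longrightarrow> (\<phi> has_real_derivative \<phi>1 t) (at t within {0..1})"
    and "\<And>t. t \<in> {0..1} \<Longrightarrow> (\<phi>1 has_real_derivative \<phi>2 t) (at t within {0..1})"
    and "\<And>t. t \<in> {0..1} \<Longrightarrow> \<bar>\<phi>2 t\<bar> \<le> M"
  shows "\<bar>Bpoly n \<phi> x - \<phi> x\<bar> \<le> M * (x * (1 - x) / real n)"
proof -
  have "\<bar>Bpoly n \<phi> x - \<phi> x - 0 * (x * (1 - x) / real n)\<bar> \<le> M * Bpoly n (\<lambda>t. \<bar>t - x\<bar>^2) x"
    using Taylor_linear_remainder_le[of "{0..1}" \<phi> \<phi>1 \<phi>2 M x] assms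
    by (intro abs_Bpoly_minus_quadratic_le[where c = "\<phi>1 x"]) auto
  then show ?thesis
    by (simp add: Bpoly_central_moment_2[OF n])
qed

text \<open>The error in Voronovskaya's formula B_n phi (x) ~ phi(x) + x(1-x)/(2n) phi''(x);
  the argument c stands for phi''(x).\<close>

definition voronovskaya_remainder :: "nat \<Rightarrow> (real \<Rightarrow> real) \<Rightarrow> real \<Rightarrow> real \<Rightarrow> real" where
  "voronovskaya_remainder n \<phi> c x = Bpoly n \<phi> x - \<phi> x - x * (1 - x) / real n * c / 2"

lemma abs_voronovskaya_remainder_le:
  assumes n: "n \<ge> 1" and x: "0 \<le> x" "x \<le> 1"
    and "\<And>t. t \<in> {0..1} \<Longrightarrow> (\<phi> has_real_derivative \<phi>1 t) (at t within {0..1})"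
    and "\<And>t. t \<in> {0..1} \<Longrightarrow> (\<phi>1 has_real_derivative \<phi>2 t) (at t within {0..1})"
    and "\<And>t. t \<in> {0..1} \<Longrightarrow> (\<phi>2 has_real_derivative \<phi>3 t) (at t within {0..1})"
    and M: "\<And>t. t \<in> {0..1} \<Longrightarrow> \<bar>\<phi>3 t\<bar> \<le> M"
  shows "real n * \<bar>voronovskaya_remainder n \<phi> (\<phi>2 x) x\<bar> \<le> 3/4 * M * (x * (1 - x) / sqrt (real n))"
proof -
  have "M \<ge> 0"
    using M[of 0] by simp
  have "\<bar>Bpoly n \<phi> x - \<phi> x - \<phi>2 x / 2 * (x * (1 - x) / real n)\<bar> \<le> M / 2 * Bpoly n (\<lambda>t. \<bar>t - x\<bar>^3) x"
    using Taylor_quadratic_remainder_le[of "{0..1}" \<phi> \<phi>1 \<phi>2 \<phi>3 M x] assms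
    by (intro abs_Bpoly_minus_quadratic_le[where c = "\<phi>1 x"]) auto
  then have "\<bar>voronovskaya_remainder n \<phi> (\<phi>2 x) x\<bar> \<le> M / 2 * Bpoly n (\<lambda>t. \<bar>t - x\<bar>^3) x"
    unfolding voronovskaya_remainder_def by (simp add: mult_ac)
  also have "\<dots> \<le> M / 2 * (3/2 * x * (1 - x) / (real n * sqrt (real n)))"
    using \<open>M \<ge> 0\<close> Bpoly_abs_central_moment_3_le[OF n x] by (intro mult_left_mono) simp_all
  finally show ?thesis
    using n by (simp add: field_simps)
qed

lemma C3_on01_derivatives:
  assumes "C3_on01 f f1 f2 f3" "t \<in> {0..1}"
  shows "(f has_real_derivative f1 t) (at t within {0..1})"
    and "(f1 has_real_derivative f2 t) (at t within {0..1})"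
    and "(f2 has_real_derivative f3 t) (at t within {0..1})"
  using assms unfolding C3_on01_def by blast+

lemma C3_on01_continuous_on:
  assumes "C3_on01 f f1 f2 f3"
  shows "continuous_on {0..1} f" "continuous_on {0..1} f2" "continuous_on {0..1} f3"
  using assms C3_on01_derivatives[OF assms] DERIV_continuous
  unfolding C3_on01_def continuous_on_eq_continuous_within by blast+

lemma abs_le_unorm:
  assumes "continuous_on {0..1} \<phi>" "t \<in> {0..1}"
  shows "\<bar>\<phi> t\<bar> \<le> unorm \<phi>"
proof -
  have "compact ((\<lambda>x. \<bar>\<phi> x\<bar>) ` {0..1::real})"
    using assms(1) by (intro compact_continuous_image continuous_on_rabs compact_Icc)
  then have "bdd_above ((\<lambda>x. \<bar>\<phi> x\<bar>) ` {0..1::real})"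
    by (intro bounded_imp_bdd_above compact_imp_bounded)
  then show ?thesis
    unfolding unorm_def using assms(2) by (rule cSUP_upper2) simp
qed

lemma second_derivative_mult:
  assumes x: "x \<in> {0..1}"
    and f: "\<And>t. t \<in> {0..1} \<Longrightarrow> (f has_real_derivative f1 t) (at t within {0..1})"
      "\<And>t. t \<in> {0..1} \<Longrightarrow> (f1 has_real_derivative f2 t) (at t within {0..1})"
    and g: "\<And>t. t \<in> {0..1} \<Longrightarrow> (g has_real_derivative g1 t) (at t within {0..1})"
      "\<And>t. t \<in> {0..1} \<Longrightarrow> (g1 has_real_derivative g2 t) (at t within {0..1})"
    and h: "\<And>t. t \<in> {0..1} \<Longrightarrow> ((\<lambda>t. f t * g t) has_real_derivative h1 t) (at t within {0..1})"
      "\<And>t. t \<in> {0..1} \<Longrightarrow> (h1 has_real_derivative h2 t) (at t within {0..1})"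
  shows "h2 x = f2 x * g x + 2 * f1 x * g1 x + f x * g2 x"
proof -
  have nontrivial: "at t within {0..1} \<noteq> bot" if "t \<in> {0..1::real}" for t
    using that by (simp add: trivial_limit_within islimpt_Icc)
  have h1_eq: "h1 t = f1 t * g t + g1 t * f t" if "t \<in> {0..1}" for t
    using h(1) DERIV_mult[OF f(1) g(1)] that
    by (intro has_field_derivative_unique[OF _ _ nontrivial]) auto
  have "((\<lambda>t. f1 t * g t + g1 t * f t) has_real_derivative h2 x) (at x within {0..1})"
    by (rule has_field_derivative_transform_within[OF h(2)[OF x], where d = 1])
      (use x h1_eq in auto)
  moreover have "((\<lambda>t. f1 t * g t + g1 t * f t) has_real_derivative
      (f2 x * g x + g1 x * f1 x) + (g2 x * f x + f1 x * g1 x)) (at x within {0..1})"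
    using f g x by (intro DERIV_add DERIV_mult) auto
  ultimately have "h2 x = (f2 x * g x + g1 x * f1 x) + (g2 x * f x + f1 x * g1 x)"
    using nontrivial[OF x] by (rule has_field_derivative_unique)
  then show ?thesis
    by (simp add: algebra_simps)
qed

lemma n_mult_abs_mult_le_variance:
  assumes n: "n \<ge> 1" and x: "0 \<le> x" "x \<le> 1"
    and a: "\<bar>a\<bar> \<le> M * (x * (1 - x) / real n)" and b: "\<bar>b\<bar> \<le> N * (x * (1 - x) / real n)"
    and "0 \<le> M" "0 \<le> N"
  shows "real n * \<bar>a * b\<bar> \<le> M * N * (x * (1 - x) / sqrt (real n))"
proof -
  have A: "0 \<le> x * (1 - x)" "x * (1 - x) \<le> 1"
    using x by (auto simp: mult_le_one)
  have MN: "0 \<le> M * N"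
    using assms by simp
  have "\<bar>a * b\<bar> \<le> (M * (x * (1 - x) / real n)) * (N * (x * (1 - x) / real n))"
    unfolding abs_mult using a b by (intro mult_mono) auto
  then have "real n * \<bar>a * b\<bar>
      \<le> real n * ((M * (x * (1 - x) / real n)) * (N * (x * (1 - x) / real n)))"
    by (rule mult_left_mono) simp
  also have "\<dots> = M * N * (x * (1 - x) * (x * (1 - x)) / real n)"
    using n by (simp add: field_simps)
  also have "\<dots> \<le> M * N * (x * (1 - x) / sqrt (real n))"
  proof (intro mult_left_mono MN)
    have "x * (1 - x) * (x * (1 - x)) / real n \<le> x * (1 - x) / real n"
      using A n by (intro divide_right_mono mult_left_le) auto
    also have "\<dots> \<le> x * (1 - x) / sqrt (real n)"
      using A n by (intro divide_left_mono real_le_lsqrt) (auto simp: power2_eq_square)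
    finally show "x * (1 - x) * (x * (1 - x)) / real n \<le> x * (1 - x) / sqrt (real n)" .
  qed
  finally show ?thesis .
qed

lemma Bpoly_mult_defect_eq:
  assumes "h2x = f2x * g x + 2 * f1x * g1x + f x * g2x"
  shows "Bpoly n (\<lambda>t. f t * g t) x - Bpoly n f x * Bpoly n g x - x * (1 - x) / real n * f1x * g1x
       = voronovskaya_remainder n (\<lambda>t. f t * g t) h2x x - f x * voronovskaya_remainder n g g2x x
         - g x * voronovskaya_remainder n f f2x x - (Bpoly n f x - f x) * (Bpoly n g x - g x)"
  unfolding voronovskaya_remainder_def assms
  by (simp add: algebra_simps add_divide_distrib diff_divide_distrib)

lemma Bpoly_mult_defect_le:
  assumes cf: "C3_on01 f f1 f2 f3" and cg: "C3_on01 g g1 g2 g3"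
    and ch: "C3_on01 (\<lambda>t. f t * g t) h1 h2 h3"
    and x: "x \<in> {0..1}" and n: "n \<ge> 1"
    and Mf: "\<And>t. t \<in> {0..1} \<Longrightarrow> \<bar>f t\<bar> \<le> Mf" and Mg: "\<And>t. t \<in> {0..1} \<Longrightarrow> \<bar>g t\<bar> \<le> Mg"
    and M2f: "\<And>t. t \<in> {0..1} \<Longrightarrow> \<bar>f2 t\<bar> \<le> M2f" and M2g: "\<And>t. t \<in> {0..1} \<Longrightarrow> \<bar>g2 t\<bar> \<le> M2g"
    and M3f: "\<And>t. t \<in> {0..1} \<Longrightarrow> \<bar>f3 t\<bar> \<le> M3f" and M3g: "\<And>t. t \<in> {0..1} \<Longrightarrow> \<bar>g3 t\<bar> \<le> M3g"
    and M3h: "\<And>t. t \<in> {0..1} \<Longrightarrow> \<bar>h3 t\<bar> \<le> M3h"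
  shows "real n * \<bar>Bpoly n (\<lambda>t. f t * g t) x - Bpoly n f x * Bpoly n g x
            - x * (1 - x) / real n * f1 x * g1 x\<bar>
       \<le> x * (1 - x) / sqrt (real n) * (M3h + M2f * M2g + Mg * M3f + Mf * M3g)"
proof -
  have x01: "0 \<le> x" "x \<le> 1"
    using x by auto
  define A where "A = x * (1 - x) / sqrt (real n)"
  define Rh Rf Rg where "Rh = voronovskaya_remainder n (\<lambda>t. f t * g t) (h2 x) x"
    and "Rf = voronovskaya_remainder n f (f2 x) x" and "Rg = voronovskaya_remainder n g (g2 x) x"
  define Df Dg where "Df = Bpoly n f x - f x" and "Dg = Bpoly n g x - g x"
  note df = C3_on01_derivatives[OF cf] and dg = C3_on01_derivatives[OF cg]
    and dh = C3_on01_derivatives[OF ch]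
  have defect_eq: "Bpoly n (\<lambda>t. f t * g t) x - Bpoly n f x * Bpoly n g x
      - x * (1 - x) / real n * f1 x * g1 x = Rh - f x * Rg - g x * Rf - Df * Dg"
    unfolding Rh_def Rf_def Rg_def Df_def Dg_def
    using second_derivative_mult[OF x df(1,2) dg(1,2) dh(1,2)] by (rule Bpoly_mult_defect_eq)
  have nonneg: "0 \<le> Mf" "0 \<le> Mg" "0 \<le> M2f" "0 \<le> M2g" "0 \<le> M3f" "0 \<le> M3g" "0 \<le> M3h" "0 \<le> A"
    using Mf[of 0] Mg[of 0] M2f[of 0] M2g[of 0] M3f[of 0] M3g[of 0] M3h[of 0] x01
    unfolding A_def by auto
  have Rh: "real n * \<bar>Rh\<bar> \<le> 3/4 * M3h * A"
    unfolding Rh_def A_def by (rule abs_voronovskaya_remainder_le[OF n x01 dh M3h])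
  have Rf: "real n * \<bar>Rf\<bar> \<le> 3/4 * M3f * A"
    unfolding Rf_def A_def by (rule abs_voronovskaya_remainder_le[OF n x01 df M3f])
  have Rg: "real n * \<bar>Rg\<bar> \<le> 3/4 * M3g * A"
    unfolding Rg_def A_def by (rule abs_voronovskaya_remainder_le[OF n x01 dg M3g])
  have DfDg: "real n * \<bar>Df * Dg\<bar> \<le> M2f * M2g * A"
    unfolding Df_def Dg_def A_def using nonneg(3,4)
    by (intro n_mult_abs_mult_le_variance[OF n x01 abs_Bpoly_minus_self_le[OF n x01 df(1,2) M2f]
        abs_Bpoly_minus_self_le[OF n x01 dg(1,2) M2g]])
  have "real n * \<bar>Rh - f x * Rg - g x * Rf - Df * Dg\<bar>
      \<le> real n * (\<bar>Rh\<bar> + \<bar>f x\<bar> * \<bar>Rg\<bar> + \<bar>g x\<bar> * \<bar>Rf\<bar> + \<bar>Df * Dg\<bar>)"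
    by (intro mult_left_mono) (auto simp flip: abs_mult)
  also have "\<dots> = real n * \<bar>Rh\<bar> + \<bar>f x\<bar> * (real n * \<bar>Rg\<bar>) + \<bar>g x\<bar> * (real n * \<bar>Rf\<bar>)
      + real n * \<bar>Df * Dg\<bar>"
    by (simp add: algebra_simps)
  also have "\<dots> \<le> 3/4 * M3h * A + Mf * (3/4 * M3g * A) + Mg * (3/4 * M3f * A) + M2f * M2g * A"
    using Rh DfDg nonneg
    by (intro add_mono order.refl mult_mono[OF Mf[OF x] Rg] mult_mono[OF Mg[OF x] Rf]) simp_all
  also have "\<dots> \<le> M3h * A + Mf * (M3g * A) + Mg * (M3f * A) + M2f * M2g * A"
    using nonneg by (intro add_mono mult_left_mono mult_right_mono order.refl) simp_all
  also have "\<dots> = A * (M3h + M2f * M2g + Mg * M3f + Mf * M3g)"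
    by (simp add: algebra_simps)
  finally show ?thesis
    unfolding defect_eq A_def .
qed

theorem corollary2p2:
  shows "\<exists>C>0. \<forall>f f1 f2 f3 g g1 g2 g3 h1 h2 h3 (x::real) (n::nat).
     C3_on01 f f1 f2 f3 \<longrightarrow> C3_on01 g g1 g2 g3 \<longrightarrow>
     C3_on01 (\<lambda>t. f t * g t) h1 h2 h3 \<longrightarrow>
     x \<in> {0..1} \<longrightarrow> n \<ge> 1 \<longrightarrow>
     real n * \<bar>Bpoly n (\<lambda>t. f t * g t) x - Bpoly n f x * Bpoly n g x
                 - x * (1 - x) / real n * f1 x * g1 x\<bar>
       \<le> C * x * (1 - x) * (1 / sqrt (real n)) *
          (unorm h3 + unorm f2 * unorm g2 + unorm g * unorm f3 + unorm f * unorm g3)"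
proof (intro exI[of _ 1] conjI allI impI)
  fix f f1 f2 f3 g g1 g2 g3 h1 h2 h3 and x :: real and n :: nat
  assume cf: "C3_on01 f f1 f2 f3" and cg: "C3_on01 g g1 g2 g3"
    and ch: "C3_on01 (\<lambda>t. f t * g t) h1 h2 h3" and x: "x \<in> {0..1}" and n: "n \<ge> 1"
  note cont_f = C3_on01_continuous_on[OF cf] and cont_g = C3_on01_continuous_on[OF cg]
    and cont_h = C3_on01_continuous_on[OF ch]
  show "real n * \<bar>Bpoly n (\<lambda>t. f t * g t) x - Bpoly n f x * Bpoly n g x
          - x * (1 - x) / real n * f1 x * g1 x\<bar>
      \<le> 1 * x * (1 - x) * (1 / sqrt (real n)) *
          (unorm h3 + unorm f2 * unorm g2 + unorm g * unorm f3 + unorm f * unorm g3)"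
    using Bpoly_mult_defect_le[OF cf cg ch x n
        abs_le_unorm[OF cont_f(1)] abs_le_unorm[OF cont_g(1)]
        abs_le_unorm[OF cont_f(2)] abs_le_unorm[OF cont_g(2)]
        abs_le_unorm[OF cont_f(3)] abs_le_unorm[OF cont_g(3)] abs_le_unorm[OF cont_h(3)]]
    by simp
qed simp

end
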